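(* Let $\Omega\subset\mathbb R^2$ be a convex polygonal domain with corners $\boldsymbol c_j$, $j=1,\dots,d$, and boundary $\Gamma$. Let $\sigma:=d_I+\rho$ with $\rho(x)=\operatorname{dist}(x,\Gamma)$ and $d_I=c_Ih^2\in(0,e^{-1})$ for a fixed constant $c_I>1$ and a parameter $h>0$. Let $r_j(x):=|x-\boldsymbol c_j|$, $\Omega_R^j:=\{x\in\Omega: r_j(x)<R\}$ with $R>0$ so small that these sets are pairwise disjoint, and $\hat\Omega_{R/2}:=\Omega\setminus\bigcup_{j}\Omega_{R/2}^j$. Then for $\beta_j\in[0,1)$, $j=1,\dots,d$, with constants $c$ independent of $h$, $$\|\sigma^{-1/2}r_j^{-\beta_j}\|_{L^2(\Omega_R^j)}\le c\,|\ln h|^{1/2}\times\begin{cases}h^{\min\{0,1-2\beta_j\}}&\text{if }\beta_j\ne\tfrac12,\\ |\ln h|^{1/2}&\text{if }\beta_j=\tfrac12,\end{cases}$$ and $$\|\sigma^{-1/2}\|_{L^2(\hat\Omega_{R/2})}\le c\,|\ln h|^{1/2}.$$ *)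

theory Defs
  imports "HOL-Analysis.Analysis"
begin

definition L2_norm_sq :: "(real^2) set \<Rightarrow> (real^2 \<Rightarrow> real) \<Rightarrow> ennreal" where
  "L2_norm_sq S f = (\<integral>\<^sup>+ x\<in>S. ennreal ((f x)\<^sup>2) \<partial>lborel)"

definition sigma_w :: "(real^2) set \<Rightarrow> real \<Rightarrow> real \<Rightarrow> real^2 \<Rightarrow> real" where
  "sigma_w \<Omega> cI h x = cI * h\<^sup>2 + infdist x (frontier \<Omega>)"

end

theory Submission
  imports Defs
begin

lemma orthogonal_transformation_borel_measurable:
  fixes T :: "'a::euclidean_space \<Rightarrow> 'a"
  assumes "orthogonal_transformation T"
  shows "T \<in> borel_measurable borel"
  by (metis assms borel_measurable_continuous_onI linear_conv_bounded_linear
      linear_continuous_on orthogonal_transformation_linear)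

lemma lborel_distr_orthogonal_transformation:
  fixes T :: "real^'n::{finite,wellorder} \<Rightarrow> real^'n::{finite,wellorder}"
  assumes T: "orthogonal_transformation T"
  shows "distr lborel borel T = lborel"
proof (rule lborel_eqI[symmetric])
  fix l u :: "real^'n::{finite,wellorder}" assume "\<And>b. b \<in> Basis \<Longrightarrow> l \<bullet> b \<le> u \<bullet> b"
  then have box: "measure lebesgue (box l u) = (\<Prod>b\<in>Basis. (u - l) \<bullet> b)"
    by (simp add: measure_lborel_box_eq)
  have T_meas: "T \<in> borel_measurable borel"
    by (rule orthogonal_transformation_borel_measurable[OF T])
  have preimage: "T -` box l u = inv T ` box l u"
    using orthogonal_transformation_bij[OF T] by (simp add: bij_vimage_eq_inv_image)
  have "emeasure (distr lborel borel T) (box l u) = emeasure lebesgue (inv T ` box l u)"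
    using T_meas by (simp add: emeasure_distr measurable_sets_borel flip: preimage)
  also have "\<dots> = measure lebesgue (box l u)"
    using measurable_orthogonal_image[OF orthogonal_transformation_inv[OF T]]
      measure_orthogonal_image[OF orthogonal_transformation_inv[OF T]]
    by (simp add: emeasure_eq_measure2)
  finally show "emeasure (distr lborel borel T) (box l u) = (\<Prod>b\<in>Basis. (u - l) \<bullet> b)"
    by (simp add: box)
qed simp

lemma nn_integral_lborel_isometry:
  fixes f :: "real^'n::{finite,wellorder} \<Rightarrow> ennreal"
    and T :: "real^'n::{finite,wellorder} \<Rightarrow> real^'n::{finite,wellorder}"
  assumes f[measurable]: "f \<in> borel_measurable borel" and T: "orthogonal_transformation T"
  shows "(\<integral>\<^sup>+x. f x \<partial>lborel) = (\<integral>\<^sup>+z. f (p + T z) \<partial>lborel)"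
proof -
  have [measurable]: "T \<in> borel_measurable borel"
    by (rule orthogonal_transformation_borel_measurable[OF T])
  have "(\<integral>\<^sup>+x. f x \<partial>lborel) = (\<integral>\<^sup>+x. f x \<partial>distr lborel borel ((+) p))"
    by (simp add: lborel_distr_plus)
  also have "\<dots> = (\<integral>\<^sup>+x. f (p + x) \<partial>lborel)"
    by (simp add: nn_integral_distr)
  also have "\<dots> = (\<integral>\<^sup>+z. f (p + T z) \<partial>lborel)"
    by (subst lborel_distr_orthogonal_transformation[OF T, symmetric]) (simp add: nn_integral_distr)
  finally show ?thesis .
qed

lemma nn_integral_real2_product:
  fixes f g :: "real \<Rightarrow> ennreal"
  assumes [measurable]: "f \<in> borel_measurable borel" "g \<in> borel_measurable borel"
  shows "(\<integral>\<^sup>+z. f (z$1) * g ((z::real^2)$2) \<partial>lborel) = (\<integral>\<^sup>+s. f s \<partial>lborel) * (\<integral>\<^sup>+t. g t \<partial>lborel)"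
proof -
  define F where "F b = (if b = axis 1 1 then f else g)" for b :: "real^2"
  have Basis: "(Basis :: (real^2) set) = {axis 1 1, axis 2 1}"
    by (auto simp: Basis_vec_def UNIV_2)
  have distinct: "axis 1 1 \<noteq> (axis 2 1 :: real^2)"
    by (simp add: axis_eq_axis)
  have "(\<Prod>b\<in>Basis. F b (z \<bullet> b)) = f (z$1) * g (z$2)" for z :: "real^2"
    using distinct by (simp add: Basis F_def inner_axis)
  moreover have "(\<Prod>b\<in>Basis. \<integral>\<^sup>+x. F b x \<partial>lborel) = (\<integral>\<^sup>+s. f s \<partial>lborel) * (\<integral>\<^sup>+t. g t \<partial>lborel)"
    using distinct by (simp add: Basis F_def)
  moreover have "(\<integral>\<^sup>+z. (\<Prod>b\<in>Basis. F b (z \<bullet> b)) \<partial>lborel) = (\<Prod>b\<in>Basis. \<integral>\<^sup>+x. F b x \<partial>lborel)"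
    by (rule nn_integral_lborel_prod) (auto simp: F_def)
  ultimately show ?thesis by simp
qed

lemma nn_integral_powr_interval:
  fixes \<alpha> R :: real
  assumes "0 \<le> \<alpha>" "\<alpha> < 1" "0 \<le> R"
  shows "(\<integral>\<^sup>+s. ennreal (if 0 \<le> s \<and> s \<le> R then s powr (-\<alpha>) else 0) \<partial>lborel)
         = ennreal (R powr (1-\<alpha>) / (1-\<alpha>))"
proof -
  have "((\<lambda>s. s powr (-\<alpha>)) has_integral (R powr (-\<alpha>+1) / (-\<alpha>+1))) {0..R}"
    by (rule has_integral_powr_from_0) (use assms in auto)
  then have "(\<integral>\<^sup>+s. ennreal (s powr (-\<alpha>)) * indicator {0..R} s \<partial>lborel)
      = ennreal (R powr (1-\<alpha>) / (1-\<alpha>))"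
    by (subst nn_integral_has_integral_lebesgue') (auto simp: add.commute)
  then show ?thesis
    by (subst nn_integral_cong[where v = "\<lambda>s. ennreal (s powr (-\<alpha>)) * indicator {0..R} s"])
      (auto simp: indicator_def)
qed

lemma nn_integral_abs_powr_interval:
  fixes \<alpha> R :: real
  assumes "0 \<le> \<alpha>" "\<alpha> < 1" "0 \<le> R"
  shows "(\<integral>\<^sup>+s. ennreal (if \<bar>s\<bar> \<le> R then \<bar>s\<bar> powr (-\<alpha>) else 0) \<partial>lborel)
         \<le> ennreal (2 * (R powr (1-\<alpha>) / (1-\<alpha>)))"
proof -
  define g where "g s = ennreal (if 0 \<le> s \<and> s \<le> R then s powr (-\<alpha>) else 0)" for s :: real
  have [measurable]: "g \<in> borel_measurable borel"
    unfolding g_def by measurable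
  have "(\<integral>\<^sup>+s. ennreal (if \<bar>s\<bar> \<le> R then \<bar>s\<bar> powr (-\<alpha>) else 0) \<partial>lborel)
      \<le> (\<integral>\<^sup>+s. g s + g (-s) \<partial>lborel)"
    by (intro nn_integral_mono) (auto simp: g_def)
  also have "\<dots> = (\<integral>\<^sup>+s. g s \<partial>lborel) + (\<integral>\<^sup>+s. g (-s) \<partial>lborel)"
    by (rule nn_integral_add) auto
  also have "(\<integral>\<^sup>+s. g (-s) \<partial>lborel) = (\<integral>\<^sup>+s. g s \<partial>lborel)"
    using nn_integral_real_affine[of g "-1" 0] by simp
  also have "(\<integral>\<^sup>+s. g s \<partial>lborel) = ennreal (R powr (1-\<alpha>) / (1-\<alpha>))"
    unfolding g_def by (rule nn_integral_powr_interval[OF assms])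
  finally show ?thesis
    using assms by (simp add: ennreal_plus[symmetric] del: ennreal_plus)
qed

lemma nn_integral_inverse_shift_interval:
  fixes d R :: real
  assumes "0 < d" "0 \<le> R"
  shows "(\<integral>\<^sup>+t. ennreal (if 0 \<le> t \<and> t \<le> R then 1 / (d + t) else 0) \<partial>lborel)
         = ennreal (ln (d + R) - ln d)"
proof -
  have "((\<lambda>t. 1 / (d + t)) has_integral (ln (d + R) - ln (d + 0))) {0..R}"
    using assms
    by (intro fundamental_theorem_of_calculus)
       (auto intro!: derivative_eq_intros simp flip: has_real_derivative_iff_has_vector_derivative
             simp: field_simps)
  then have "(\<integral>\<^sup>+t. ennreal (1 / (d + t)) * indicator {0..R} t \<partial>lborel) = ennreal (ln (d + R) - ln d)"
    using assms by (subst nn_integral_has_integral_lebesgue') auto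
  then show ?thesis
    by (subst nn_integral_cong[where v = "\<lambda>t. ennreal (1 / (d + t)) * indicator {0..R} t"])
      (auto simp: indicator_def)
qed

lemma nn_integral_powr_div_shift_le:
  fixes d R \<gamma> :: real
  assumes d: "0 < d" and \<gamma>: "0 < \<gamma>" "\<gamma> < 1"
  shows "(\<integral>\<^sup>+t. ennreal (if 0 \<le> t \<and> t \<le> R then t powr (-\<gamma>) / (d + t) else 0) \<partial>lborel)
         \<le> ennreal (d powr (-\<gamma>) / (1-\<gamma>) + d powr (-\<gamma>) / \<gamma>)"
proof -
  have "((\<lambda>t. t powr (-\<gamma>) / d) has_integral (d powr (-\<gamma>+1) / (-\<gamma>+1)) / d) {0..d}"
    by (intro has_integral_divide has_integral_powr_from_0) (use assms in auto)
  moreover have "(d powr (-\<gamma>+1) / (-\<gamma>+1)) / d = d powr (-\<gamma>) / (1-\<gamma>)"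
    using assms by (simp only: powr_add powr_one) (simp add: field_simps)
  ultimately have near: "((\<lambda>t. t powr (-\<gamma>) / d) has_integral d powr (-\<gamma>) / (1-\<gamma>)) {0..d}"
    by simp
  have "((\<lambda>t. t powr (-\<gamma>-1)) has_integral -(d powr (-\<gamma>-1+1)) / (-\<gamma>-1+1)) {d..}"
    by (rule has_integral_powr_to_inf) (use assms in auto)
  then have far: "((\<lambda>t. t powr (-\<gamma>-1)) has_integral d powr (-\<gamma>) / \<gamma>) {d..}"
    by simp
  have "ennreal (if 0 \<le> t \<and> t \<le> R then t powr (-\<gamma>) / (d + t) else 0)
      \<le> ennreal (t powr (-\<gamma>) / d) * indicator {0..d} t + ennreal (t powr (-\<gamma>-1)) * indicator {d..} t"
    for t :: real
  proof (cases "0 \<le> t \<and> t \<le> R")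
    case True
    show ?thesis
    proof (cases "t \<le> d")
      case True
      with \<open>0 \<le> t \<and> t \<le> R\<close> d have "t powr (-\<gamma>) / (d + t) \<le> t powr (-\<gamma>) / d"
        by (intro divide_left_mono) auto
      with \<open>0 \<le> t \<and> t \<le> R\<close> True show ?thesis
        by (auto simp: indicator_def intro: add_increasing2 ennreal_leI)
    next
      case False
      with \<open>0 \<le> t \<and> t \<le> R\<close> d have "t powr (-\<gamma>) / (d + t) \<le> t powr (-\<gamma>) / t"
        by (intro divide_left_mono) auto
      also have "\<dots> = t powr (-\<gamma>-1)"
        using False d by (simp add: powr_diff)
      finally show ?thesis
        using \<open>0 \<le> t \<and> t \<le> R\<close> False by (auto simp: indicator_def intro: add_increasing ennreal_leI)
    qed
  qed auto
  then have "(\<integral>\<^sup>+t. ennreal (if 0 \<le> t \<and> t \<le> R then t powr (-\<gamma>) / (d + t) else 0) \<partial>lborel)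
      \<le> (\<integral>\<^sup>+t. ennreal (t powr (-\<gamma>) / d) * indicator {0..d} t
              + ennreal (t powr (-\<gamma>-1)) * indicator {d..} t \<partial>lborel)"
    by (rule nn_integral_mono)
  also have "\<dots> = ennreal (d powr (-\<gamma>) / (1-\<gamma>)) + ennreal (d powr (-\<gamma>) / \<gamma>)"
    using d by (subst nn_integral_add)
      (auto simp: nn_integral_has_integral_lebesgue'[OF _ near] nn_integral_has_integral_lebesgue'[OF _ far])
  finally show ?thesis
    using \<gamma> by simp
qed

lemma norm_powr_le_coordinate_powr:
  fixes z :: "real^2" and \<alpha> \<gamma> :: real
  assumes "z$1 \<noteq> 0" "0 < z$2" "0 \<le> \<alpha>" "0 \<le> \<gamma>"
  shows "norm z powr (-(\<alpha> + \<gamma>)) \<le> \<bar>z$1\<bar> powr (-\<alpha>) * (z$2) powr (-\<gamma>)"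
proof -
  have "norm z powr (-(\<alpha> + \<gamma>)) = norm z powr (-\<alpha>) * norm z powr (-\<gamma>)"
    by (simp add: powr_add[symmetric])
  also have "\<dots> \<le> \<bar>z$1\<bar> powr (-\<alpha>) * (z$2) powr (-\<gamma>)"
    using assms component_le_norm_cart[of z 1] component_le_norm_cart[of z 2]
    by (intro mult_mono powr_mono2') auto
  finally show ?thesis .
qed

definition radial_weight :: "real \<Rightarrow> real^2 \<Rightarrow> real^2 \<Rightarrow> real" where
  "radial_weight \<beta> p x = (if x = p then 1 else dist x p powr (-2*\<beta>))"

lemma radial_weight_nonneg: "0 \<le> radial_weight \<beta> p x"
  by (simp add: radial_weight_def)

lemma radial_weight_zero [simp]: "radial_weight 0 p x = 1"
  by (simp add: radial_weight_def)

lemma radial_weight_measurable [measurable]: "radial_weight \<beta> p \<in> borel_measurable borel"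
  unfolding radial_weight_def by measurable

lemma half_disc_weighted_integral_le:
  fixes n p :: "real^2" and \<phi> :: "real \<Rightarrow> real" and R \<alpha> \<beta> \<gamma> :: real
  assumes n: "norm n = 1" and R: "0 \<le> R" and \<alpha>: "0 \<le> \<alpha>" "\<alpha> < 1" and \<gamma>: "0 \<le> \<gamma>"
    and split: "\<alpha> + \<gamma> = 2*\<beta>"
    and \<phi>[measurable]: "\<phi> \<in> borel_measurable borel" and \<phi>_nonneg: "\<And>t. 0 \<le> t \<Longrightarrow> 0 \<le> \<phi> t"
  shows "(\<integral>\<^sup>+x. ennreal (if dist x p < R \<and> 0 \<le> n \<bullet> (p - x)
                      then radial_weight \<beta> p x * \<phi> (n \<bullet> (p - x)) else 0) \<partial>lborel)
       \<le> ennreal (2 * (R powr (1-\<alpha>) / (1-\<alpha>)))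
           * (\<integral>\<^sup>+t. ennreal (if 0 \<le> t \<and> t \<le> R then t powr (-\<gamma>) * \<phi> t else 0) \<partial>lborel)"
proof -
  obtain T :: "real^2 \<Rightarrow> real^2" where T: "orthogonal_transformation T" "T (axis 2 1) = -n"
    by (rule orthogonal_transformation_exists_1[of "axis 2 1" "-n"]) (simp_all add: n)
  have height: "n \<bullet> (p - (p + T z)) = z$2" for z :: "real^2"
  proof -
    have "n \<bullet> (p - (p + T z)) = T (axis 2 1) \<bullet> T z"
      using T(2) by simp
    also have "\<dots> = z$2"
      using T(1) by (simp add: orthogonal_transformation_def inner_axis')
    finally show ?thesis .
  qed
  have dist_T: "dist (p + T z) p = norm z" for z
    by (simp add: dist_norm orthogonal_transformation_norm[OF T(1)])
  have centre_T: "p + T z = p \<longleftrightarrow> z = 0" for z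
    by (metis add_cancel_left_right norm_eq_zero orthogonal_transformation_norm[OF T(1)])
  define F where "F = (\<lambda>x. ennreal (if dist x p < R \<and> 0 \<le> n \<bullet> (p - x)
                      then radial_weight \<beta> p x * \<phi> (n \<bullet> (p - x)) else 0))"
  define g1 where "g1 = (\<lambda>s. ennreal (if \<bar>s\<bar> \<le> R then \<bar>s\<bar> powr (-\<alpha>) else 0))"
  define g2 where "g2 = (\<lambda>t. ennreal (if 0 \<le> t \<and> t \<le> R then t powr (-\<gamma>) * \<phi> t else 0))"
  have F_meas: "F \<in> borel_measurable borel"
    unfolding F_def by measurable
  have g1_meas: "g1 \<in> borel_measurable borel"
    unfolding g1_def by measurable
  have g2_meas: "g2 \<in> borel_measurable borel"
    unfolding g2_def by measurable
  have rotated: "F (p + T z) = ennreal (if norm z < R \<and> 0 \<le> z$2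
      then (if z = 0 then 1 else norm z powr (-2*\<beta>)) * \<phi> (z$2) else 0)" for z
    unfolding F_def radial_weight_def height dist_T centre_T ..
  have "AE z in lborel. (z::real^2) \<bullet> axis 1 1 \<noteq> 0" "AE z in lborel. (z::real^2) \<bullet> axis 2 1 \<noteq> 0"
    by (simp_all add: AE_lborel_inner_neq)
  then have pointwise: "AE z in lborel. F (p + T z) \<le> g1 (z$1) * g2 ((z::real^2)$2)"
  proof eventually_elim
    case (elim z)
    then have z: "z$1 \<noteq> 0" "z$2 \<noteq> 0"
      by (simp_all add: inner_axis)
    show ?case
    proof (cases "norm z < R \<and> 0 \<le> z$2")
      case True
      with z have "z \<noteq> 0" "\<bar>z$1\<bar> \<le> R" "z$2 \<le> R"
        using component_le_norm_cart[of z 1] component_le_norm_cart[of z 2] by auto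
      moreover have "norm z powr (-2*\<beta>) * \<phi> (z$2) \<le> \<bar>z$1\<bar> powr (-\<alpha>) * ((z$2) powr (-\<gamma>) * \<phi> (z$2))"
        using norm_powr_le_coordinate_powr[of z \<alpha> \<gamma>] z True \<alpha> \<gamma> split
        by (simp add: mult.assoc[symmetric] mult_right_mono \<phi>_nonneg True)
      ultimately show ?thesis
        using True by (simp add: rotated g1_def g2_def ennreal_mult[symmetric] \<phi>_nonneg)
    next
      case False
      show ?thesis
        unfolding rotated if_not_P[OF False] by simp
    qed
  qed
  have "(\<integral>\<^sup>+x. F x \<partial>lborel) = (\<integral>\<^sup>+z. F (p + T z) \<partial>lborel)"
    by (rule nn_integral_lborel_isometry[OF F_meas T(1)])
  also have "\<dots> \<le> (\<integral>\<^sup>+z. g1 (z$1) * g2 ((z::real^2)$2) \<partial>lborel)"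
    by (rule nn_integral_mono_AE[OF pointwise])
  also have "\<dots> = (\<integral>\<^sup>+s. g1 s \<partial>lborel) * (\<integral>\<^sup>+t. g2 t \<partial>lborel)"
    by (rule nn_integral_real2_product[OF g1_meas g2_meas])
  also have "\<dots> \<le> ennreal (2 * (R powr (1-\<alpha>) / (1-\<alpha>))) * (\<integral>\<^sup>+t. g2 t \<partial>lborel)"
    unfolding g1_def by (intro mult_right_mono nn_integral_abs_powr_interval \<alpha> R) simp
  finally show ?thesis
    unfolding F_def g2_def .
qed


definition halfplane_integral :: "real \<Rightarrow> real^2 \<Rightarrow> real \<Rightarrow> real^2 \<Rightarrow> real \<Rightarrow> real \<Rightarrow> ennreal"
  where "halfplane_integral \<beta> a R n c d = (\<integral>\<^sup>+x. ennreal (if dist x a < R \<and> n \<bullet> x \<le> c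
           then radial_weight \<beta> a x / (d + (c - n \<bullet> x)) else 0) \<partial>lborel)"

definition corner_rate :: "real \<Rightarrow> real \<Rightarrow> real" where
  "corner_rate \<beta> d = (if \<beta> < 1/2 then - ln d
     else if \<beta> = 1/2 then (ln d)\<^sup>2 else - ln d * d powr (1 - 2*\<beta>))"

lemma corner_rate_zero: "corner_rate 0 d = - ln d"
  by (simp add: corner_rate_def)

lemma small_parameter_bounds:
  fixes d :: real
  assumes "0 < d" "d < exp (-1)"
  shows "d < 1" "1 < - ln d"
proof -
  show "d < 1"
    using assms exp_less_one_iff[of "-1::real"] by linarith
  have "ln d < ln (exp (-1))"
    using assms by (subst ln_less_cancel_iff) auto
  then show "1 < - ln d"
    by simp
qed

lemma halfplane_integral_through_centre_le:
  fixes n p :: "real^2"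
  assumes "norm n = 1" "0 \<le> R" "0 < d" "0 \<le> \<alpha>" "\<alpha> < 1" "0 \<le> \<gamma>" "\<alpha> + \<gamma> = 2*\<beta>"
  shows "halfplane_integral \<beta> p R n (n \<bullet> p) d
    \<le> ennreal (2 * (R powr (1-\<alpha>) / (1-\<alpha>)))
        * (\<integral>\<^sup>+t. ennreal (if 0 \<le> t \<and> t \<le> R then t powr (-\<gamma>) / (d + t) else 0) \<partial>lborel)"
  using half_disc_weighted_integral_le[OF assms(1,2,4-7), of "\<lambda>t. 1 / (d + t)" p] assms(3)
  by (simp add: halfplane_integral_def inner_diff_right cong: if_cong)

lemma halfplane_integral_through_centre_lt_half:
  assumes \<beta>: "0 \<le> \<beta>" "\<beta> < 1/2" and R: "0 < R"
  shows "\<exists>K\<ge>0. \<forall>d n p. 0 < d \<and> d < exp (-1) \<and> norm n = 1 \<longrightarrow>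
    halfplane_integral \<beta> p R n (n \<bullet> p) d \<le> ennreal (K * corner_rate \<beta> d)"
proof -
  define A where "A = 2 * (R powr (1 - 2*\<beta>) / (1 - 2*\<beta>))"
  have A: "0 \<le> A"
    using \<beta> by (simp add: A_def)
  show ?thesis
  proof (intro exI[of _ "A * (ln (1 + R) + 1)"] conjI allI impI)
    show "0 \<le> A * (ln (1 + R) + 1)"
      using A R by simp
  fix d :: real and n p :: "real^2"
  assume "0 < d \<and> d < exp (-1) \<and> norm n = 1"
  then have d: "0 < d" "d < exp (-1)" and n: "norm n = 1"
    by auto
  note small = small_parameter_bounds[OF d]
  have "halfplane_integral \<beta> p R n (n \<bullet> p) d
      \<le> ennreal A * (\<integral>\<^sup>+t. ennreal (if 0 \<le> t \<and> t \<le> R then t powr (-0) / (d + t) else 0) \<partial>lborel)"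
    unfolding A_def using \<beta> R d n by (intro halfplane_integral_through_centre_le) auto
  also have "\<dots> \<le> ennreal A * (\<integral>\<^sup>+t. ennreal (if 0 \<le> t \<and> t \<le> R then 1 / (d + t) else 0) \<partial>lborel)"
  proof (intro mult_left_mono nn_integral_mono ennreal_leI)
    fix t :: real
    show "(if 0 \<le> t \<and> t \<le> R then t powr (-0) / (d + t) else 0) \<le> (if 0 \<le> t \<and> t \<le> R then 1 / (d + t) else 0)"
      using d by (auto intro: divide_right_mono)
  qed simp
  also have "\<dots> = ennreal (A * (ln (d + R) - ln d))"
    using A d R by (simp add: nn_integral_inverse_shift_interval ennreal_mult)
  also have "\<dots> \<le> ennreal (A * (ln (1 + R) + 1) * corner_rate \<beta> d)"
  proof (intro ennreal_leI)
    have "ln (d + R) \<le> ln (1 + R)"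
      using d R small(1) by simp
    also have "\<dots> \<le> ln (1 + R) * (- ln d)"
      using mult_left_mono[of 1 "- ln d" "ln (1 + R)"] small(2) R by simp
    finally have "ln (d + R) - ln d \<le> (ln (1 + R) + 1) * (- ln d)"
      by (simp add: algebra_simps)
    moreover have "corner_rate \<beta> d = - ln d"
      using \<beta> by (simp add: corner_rate_def)
    ultimately show "A * (ln (d + R) - ln d) \<le> A * (ln (1 + R) + 1) * corner_rate \<beta> d"
      using A by (metis mult.assoc mult_left_mono)
  qed
  finally show "halfplane_integral \<beta> p R n (n \<bullet> p) d \<le> ennreal (A * (ln (1 + R) + 1) * corner_rate \<beta> d)" .
  qed
qed

lemma powr_le_max_one:
  fixes R e :: real
  assumes "0 < R" "0 \<le> e" "e \<le> 1"
  shows "R powr e \<le> max 1 R"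
proof (cases "R \<le> 1")
  case True
  then have "R powr e \<le> 1"
    using assms by (intro powr_le1) auto
  then show ?thesis
    by simp
next
  case False
  then have "R powr e \<le> R powr 1"
    using assms by (intro powr_mono) auto
  then show ?thesis
    using assms by simp
qed

lemma powr_neg_small_exponent_le_two:
  fixes d e :: real
  assumes "0 < d" "d < 1" "0 \<le> e" "e \<le> 1 / (2 * (- ln d))"
  shows "d powr (-e) \<le> 2"
proof -
  have "0 < - ln d"
    using assms by simp
  then have "e * (- ln d) \<le> 1/2"
    using assms by (simp add: field_simps)
  then have "d powr (-e) \<le> exp (1/2)"
    using assms by (simp add: powr_def)
  also have "\<dots> \<le> 2"
    by (rule exp_half_le2)
  finally show ?thesis .
qed

lemma corner_rate_ge_half:
  assumes "1/2 \<le> \<beta>" "0 < d"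
  shows "corner_rate \<beta> d = - ln d * d powr (1 - 2*\<beta>) * (if \<beta> = 1/2 then - ln d else 1)"
proof (cases "\<beta> = 1/2")
  case True
  then have "1 - 2*\<beta> = 0"
    by simp
  with True show ?thesis
    using assms by (simp add: corner_rate_def power2_eq_square)
qed (use assms in \<open>simp add: corner_rate_def\<close>)

lemma near_critical_split_estimate:
  fixes \<beta> d R \<epsilon> :: real
  assumes \<beta>: "1/2 \<le> \<beta>" "\<beta> < 1" and d: "0 < d" "d < exp (-1)" and R: "0 < R"
    and \<epsilon>_def: "\<epsilon> = min (1 / (2 * - ln d)) (1 - \<beta>)"
  defines "\<gamma> \<equiv> 2*\<beta> - 1 + \<epsilon>"
  shows "0 < \<epsilon>" "\<epsilon> \<le> 1/2" "0 < \<gamma>" "\<gamma> < 1"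
    and "2 * (R powr \<epsilon> / \<epsilon>) * (d powr (-\<gamma>) / (1-\<gamma>) + d powr (-\<gamma>) / \<gamma>)
      \<le> 4 * max 1 R * (2 + 1/(1-\<beta>)) * (1/(1-\<beta>) + (if \<beta> = 1/2 then 4 else 1/(2*\<beta>-1)))
         * corner_rate \<beta> d"
proof -
  define L where "L = - ln d"
  have d1: "d < 1" and L: "1 < L"
    using small_parameter_bounds[OF d] by (simp_all add: L_def)
  have "1/(2*L) \<le> 1/2"
    using L by (simp add: field_simps)
  moreover have "0 < \<epsilon>" "\<epsilon> \<le> 1/(2*L)" "\<epsilon> \<le> 1-\<beta>"
    using L \<beta> by (simp_all add: \<epsilon>_def L_def)
  ultimately have \<epsilon>: "0 < \<epsilon>" "\<epsilon> \<le> 1/2" and \<epsilon>_le: "\<epsilon> \<le> 1/(2*L)" "\<epsilon> \<le> 1-\<beta>"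
    by linarith+
  then show "0 < \<epsilon>" "\<epsilon> \<le> 1/2"
    by simp_all
  show \<gamma>: "0 < \<gamma>" "\<gamma> < 1"
    using \<epsilon> \<epsilon>_le \<beta> by (simp_all add: \<gamma>_def)
  have inv_\<epsilon>: "1/\<epsilon> \<le> (2 + 1/(1-\<beta>)) * L"
  proof (cases "1/(2*L) \<le> 1-\<beta>")
    case True
    then have "1/\<epsilon> = 2 * L"
      by (simp add: \<epsilon>_def L_def)
    then show ?thesis
      using L \<beta> by (simp add: distrib_right)
  next
    case False
    then have "1/\<epsilon> = 1/(1-\<beta>)"
      by (simp add: \<epsilon>_def L_def)
    also have "\<dots> \<le> 1/(1-\<beta>) * L"
      using mult_left_mono[of 1 L "1/(1-\<beta>)"] L \<beta> by simp
    finally show ?thesis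
      using L by (simp add: distrib_right)
  qed
  have "R powr \<epsilon> * (1/\<epsilon>) \<le> max 1 R * ((2 + 1/(1-\<beta>)) * L)"
    by (rule mult_mono[OF powr_le_max_one inv_\<epsilon>]) (use R \<epsilon> in auto)
  then have eps_factor: "R powr \<epsilon> / \<epsilon> \<le> max 1 R * ((2 + 1/(1-\<beta>)) * L)"
    by simp
  have "d powr (-\<gamma>) = d powr (1 - 2*\<beta>) * d powr (-\<epsilon>)"
    by (simp add: \<gamma>_def powr_add[symmetric])
  also have "\<dots> \<le> d powr (1 - 2*\<beta>) * 2"
    using powr_neg_small_exponent_le_two[of d \<epsilon>] d d1 \<epsilon> \<epsilon>_le by (simp add: L_def)
  finally have d_factor: "d powr (-\<gamma>) \<le> 2 * d powr (1 - 2*\<beta>)"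
    by simp
  have "1 - \<beta> \<le> 1 - \<gamma>"
    using \<epsilon>_le by (simp add: \<gamma>_def)
  then have inv_1\<gamma>: "1/(1-\<gamma>) \<le> 1/(1-\<beta>)"
    using \<beta> \<gamma> by (intro divide_left_mono mult_pos_pos) auto
  have gamma_factor: "1/(1-\<gamma>) + 1/\<gamma> \<le> (1/(1-\<beta>) + (if \<beta> = 1/2 then 4 else 1/(2*\<beta>-1)))
                                     * (if \<beta> = 1/2 then L else 1)"
  proof (cases "\<beta> = 1/2")
    case True
    have "\<gamma> = \<epsilon>" "2 + 1/(1-\<beta>) = 4"
      by (simp_all add: \<gamma>_def True)
    then have "1/\<gamma> \<le> 4 * L"
      using inv_\<epsilon> by simp
    moreover have "1/(1-\<beta>) \<le> L/(1-\<beta>)"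
      using L \<beta> by (intro divide_right_mono) auto
    ultimately have "1/(1-\<gamma>) + 1/\<gamma> \<le> L/(1-\<beta>) + 4 * L"
      using inv_1\<gamma> by linarith
    then show ?thesis
      by (simp add: True distrib_right)
  next
    case False
    then have "1/\<gamma> \<le> 1/(2*\<beta>-1)"
      using \<beta> \<epsilon> by (intro divide_left_mono mult_pos_pos) (auto simp: \<gamma>_def)
    then show ?thesis
      using False inv_1\<gamma> by simp
  qed
  have "2 * (R powr \<epsilon> / \<epsilon>) * (d powr (-\<gamma>) / (1-\<gamma>) + d powr (-\<gamma>) / \<gamma>)
      = 2 * (R powr \<epsilon> / \<epsilon>) * d powr (-\<gamma>) * (1/(1-\<gamma>) + 1/\<gamma>)"
    by (simp add: distrib_left)
  also have "\<dots> \<le> 2 * (max 1 R * ((2 + 1/(1-\<beta>)) * L)) * (2 * d powr (1 - 2*\<beta>))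
      * ((1/(1-\<beta>) + (if \<beta> = 1/2 then 4 else 1/(2*\<beta>-1))) * (if \<beta> = 1/2 then L else 1))"
    using eps_factor d_factor gamma_factor \<epsilon> \<gamma> L \<beta> by (intro mult_mono) simp_all
  also have "\<dots> = 4 * max 1 R * (2 + 1/(1-\<beta>)) * (1/(1-\<beta>) + (if \<beta> = 1/2 then 4 else 1/(2*\<beta>-1)))
         * corner_rate \<beta> d"
    using \<beta> d by (simp add: L_def corner_rate_ge_half)
  finally show "2 * (R powr \<epsilon> / \<epsilon>) * (d powr (-\<gamma>) / (1-\<gamma>) + d powr (-\<gamma>) / \<gamma>)
      \<le> 4 * max 1 R * (2 + 1/(1-\<beta>)) * (1/(1-\<beta>) + (if \<beta> = 1/2 then 4 else 1/(2*\<beta>-1)))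
         * corner_rate \<beta> d" .
qed

lemma halfplane_integral_through_centre_ge_half:
  assumes \<beta>: "1/2 \<le> \<beta>" "\<beta> < 1" and R: "0 < R"
  shows "\<exists>K\<ge>0. \<forall>d n p. 0 < d \<and> d < exp (-1) \<and> norm n = 1 \<longrightarrow>
    halfplane_integral \<beta> p R n (n \<bullet> p) d \<le> ennreal (K * corner_rate \<beta> d)"
proof -
  define K where "K = 4 * max 1 R * (2 + 1/(1-\<beta>)) * (1/(1-\<beta>) + (if \<beta> = 1/2 then 4 else 1/(2*\<beta>-1)))"
  have K: "0 \<le> K"
    using \<beta> by (simp add: K_def)
  show ?thesis
  proof (intro exI[of _ K] conjI allI impI K)
    fix d :: real and n p :: "real^2"
    assume "0 < d \<and> d < exp (-1) \<and> norm n = 1"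
    then have d: "0 < d" "d < exp (-1)" and n: "norm n = 1"
      by auto
    define \<epsilon> where "\<epsilon> = min (1 / (2 * - ln d)) (1 - \<beta>)"
    define \<gamma> where "\<gamma> = 2*\<beta> - 1 + \<epsilon>"
    note estimate = near_critical_split_estimate[OF \<beta> d R \<epsilon>_def, folded \<gamma>_def]
    have "halfplane_integral \<beta> p R n (n \<bullet> p) d
        \<le> ennreal (2 * (R powr \<epsilon> / \<epsilon>))
            * (\<integral>\<^sup>+t. ennreal (if 0 \<le> t \<and> t \<le> R then t powr (-\<gamma>) / (d + t) else 0) \<partial>lborel)"
      using halfplane_integral_through_centre_le[of n R d "1-\<epsilon>" \<gamma> \<beta> p] n R d estimate(1-4)
      by (simp add: \<gamma>_def)
    also have "\<dots> \<le> ennreal (2 * (R powr \<epsilon> / \<epsilon>)) * ennreal (d powr (-\<gamma>) / (1-\<gamma>) + d powr (-\<gamma>) / \<gamma>)"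
      by (intro mult_left_mono nn_integral_powr_div_shift_le) (use d estimate in auto)
    also have "\<dots> = ennreal (2 * (R powr \<epsilon> / \<epsilon>) * (d powr (-\<gamma>) / (1-\<gamma>) + d powr (-\<gamma>) / \<gamma>))"
      using estimate(1,3,4) by (intro ennreal_mult[symmetric]) auto
    also have "\<dots> \<le> ennreal (K * corner_rate \<beta> d)"
      unfolding K_def by (rule ennreal_leI[OF estimate(5)])
    finally show "halfplane_integral \<beta> p R n (n \<bullet> p) d \<le> ennreal (K * corner_rate \<beta> d)" .
  qed
qed

lemma halfplane_integral_through_centre:
  assumes "0 \<le> \<beta>" "\<beta> < 1" "0 < R"
  shows "\<exists>K\<ge>0. \<forall>d n p. 0 < d \<and> d < exp (-1) \<and> norm n = 1 \<longrightarrow>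
    halfplane_integral \<beta> p R n (n \<bullet> p) d \<le> ennreal (K * corner_rate \<beta> d)"
  using assms halfplane_integral_through_centre_lt_half halfplane_integral_through_centre_ge_half
  by (cases "\<beta> < 1/2") auto

lemma ball_integral_radial_weight_le:
  fixes a :: "real^2"
  assumes \<beta>: "0 \<le> \<beta>" "\<beta> < 1" and R: "0 \<le> R"
  shows "(\<integral>\<^sup>+x. ennreal (if dist x a < R then radial_weight \<beta> a x else 0) \<partial>lborel)
    \<le> ennreal (4 * (R powr (1-\<beta>) / (1-\<beta>))\<^sup>2)"
proof -
  define M where "M = R powr (1-\<beta>) / (1-\<beta>)"
  define H where "H n x = ennreal (if dist x a < R \<and> 0 \<le> n \<bullet> (a - x) then radial_weight \<beta> a x * 1 else 0)"
    for n x :: "real^2"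
  have half: "(\<integral>\<^sup>+x. H n x \<partial>lborel) \<le> ennreal (2 * M\<^sup>2)" if "norm n = 1" for n
  proof -
    have "(\<integral>\<^sup>+x. H n x \<partial>lborel)
        \<le> ennreal (2 * M) * (\<integral>\<^sup>+t. ennreal (if 0 \<le> t \<and> t \<le> R then t powr (-\<beta>) * 1 else 0) \<partial>lborel)"
      unfolding H_def M_def using that R \<beta> by (intro half_disc_weighted_integral_le) auto
    also have "\<dots> = ennreal (2 * M) * ennreal M"
      using nn_integral_powr_interval[OF \<beta> R] by (simp add: M_def cong: if_cong)
    also have "\<dots> = ennreal (2 * M\<^sup>2)"
      using \<beta> by (simp add: M_def power2_eq_square ennreal_mult[symmetric] mult.assoc)
    finally show ?thesis .
  qed
  define e :: "real^2" where "e = axis 1 1"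
  have e: "norm e = 1" "norm (-e) = 1"
    by (simp_all add: e_def)
  have "ennreal (if dist x a < R then radial_weight \<beta> a x else 0) \<le> H e x + H (-e) x" for x
  proof (cases "0 \<le> e \<bullet> (a - x)")
    case True
    then have "ennreal (if dist x a < R then radial_weight \<beta> a x else 0) \<le> H e x"
      by (simp add: H_def)
    then show ?thesis
      by (rule add_increasing2[OF zero_le])
  next
    case False
    then have "ennreal (if dist x a < R then radial_weight \<beta> a x else 0) \<le> H (-e) x"
      by (simp add: H_def)
    then show ?thesis
      by (rule add_increasing[OF zero_le])
  qed
  then have "(\<integral>\<^sup>+x. ennreal (if dist x a < R then radial_weight \<beta> a x else 0) \<partial>lborel)
      \<le> (\<integral>\<^sup>+x. H e x + H (-e) x \<partial>lborel)"
    by (rule nn_integral_mono)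
  also have "\<dots> = (\<integral>\<^sup>+x. H e x \<partial>lborel) + (\<integral>\<^sup>+x. H (-e) x \<partial>lborel)"
    by (rule nn_integral_add) (simp_all add: H_def)
  also have "\<dots> \<le> ennreal (2 * M\<^sup>2) + ennreal (2 * M\<^sup>2)"
    by (rule add_mono[OF half[OF e(1)] half[OF e(2)]])
  also have "\<dots> = ennreal (4 * M\<^sup>2)"
    by (simp flip: ennreal_plus)
  finally show ?thesis
    by (simp add: M_def)
qed

lemma minus_ln_le_corner_rate:
  assumes d: "0 < d" "d < exp (-1)" and \<beta>: "\<beta> < 1"
  shows "- ln d \<le> corner_rate \<beta> d"
proof -
  have d1: "d < 1" and L: "1 < - ln d"
    using small_parameter_bounds[OF d] by simp_all
  have factor_ge_one: "1 \<le> d powr (1 - 2*\<beta>) * (if \<beta> = 1/2 then - ln d else 1)" if "1/2 \<le> \<beta>"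
  proof (cases "\<beta> = 1/2")
    case False
    with that have "0 \<le> (1 - 2*\<beta>) * ln d"
      using d d1 by (intro mult_nonpos_nonpos) auto
    with False d show ?thesis
      by (simp add: powr_def)
  next
    case True
    then have "1 - 2*\<beta> = 0"
      by simp
    with True L d show ?thesis
      by simp
  qed
  show ?thesis
  proof (cases "\<beta> < 1/2")
    case False
    then have "- ln d * 1 \<le> - ln d * (d powr (1 - 2*\<beta>) * (if \<beta> = 1/2 then - ln d else 1))"
      using L factor_ge_one by (intro mult_left_mono) auto
    with False d show ?thesis
      by (simp add: corner_rate_ge_half mult.assoc)
  qed (simp add: corner_rate_def)
qed

lemma halfplane_integral_le:
  fixes a n :: "real^2"
  assumes n: "norm n = 1" and \<beta>: "0 \<le> \<beta>" "\<beta> < 1" and R: "0 < R" and a: "n \<bullet> a \<le> c"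
  shows "\<exists>K\<ge>0. \<forall>d. 0 < d \<and> d < exp (-1) \<longrightarrow>
    halfplane_integral \<beta> a R n c d \<le> ennreal (K * corner_rate \<beta> d)"
proof (cases "n \<bullet> a = c")
  case True
  then show ?thesis
    using halfplane_integral_through_centre[OF \<beta> R] n by blast
next
  case False
  \<comment> \<open>near the corner the distance to the line is at least q/2, away from it the weight is bounded\<close>
  define q where "q = c - n \<bullet> a"
  have q: "0 < q"
    using a False by (simp add: q_def)
  define p where "p = a + q *\<^sub>R n"
  have np: "n \<bullet> p = c"
    using n by (simp add: p_def q_def inner_add_right power2_norm_eq_inner[symmetric])
  obtain K0 where K0: "0 \<le> K0" and through_p: "\<And>d. 0 < d \<Longrightarrow> d < exp (-1) \<Longrightarrow>
      halfplane_integral 0 p (R + q) n c d \<le> ennreal (K0 * corner_rate 0 d)"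
    using halfplane_integral_through_centre[of 0 "R + q"] R q n np by force
  define C where "C = 4 * (R powr (1-\<beta>) / (1-\<beta>))\<^sup>2"
  define B where "B = (q/2) powr (-2*\<beta>)"
  have C: "0 \<le> C" and B: "0 \<le> B"
    using \<beta> by (simp_all add: C_def B_def)
  show ?thesis
  proof (intro exI[of _ "2/q * C + B * K0"] conjI allI impI)
    show "0 \<le> 2/q * C + B * K0"
      using q C B K0 by simp
    fix d :: real
    assume "0 < d \<and> d < exp (-1)"
    then have d: "0 < d" "d < exp (-1)"
      by auto
    define X where "X x = (if dist x a < R then radial_weight \<beta> a x else 0)" for x
    define Y where "Y x = (if dist x p < R + q \<and> n \<bullet> x \<le> c
      then radial_weight 0 p x / (d + (c - n \<bullet> x)) else 0)" for x
    have X: "0 \<le> X x" and Y: "0 \<le> Y x" for x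
      using d by (simp_all add: X_def Y_def radial_weight_nonneg)
    have q2: "0 \<le> 2/q"
      using q by simp
    have pointwise: "(if dist x a < R \<and> n \<bullet> x \<le> c then radial_weight \<beta> a x / (d + (c - n \<bullet> x)) else 0)
        \<le> 2/q * X x + B * Y x" for x
    proof (cases "dist x a < R \<and> n \<bullet> x \<le> c")
      case True
      have "\<bar>n \<bullet> (a - x)\<bar> \<le> dist x a"
        using Cauchy_Schwarz_ineq2[of n "a - x"] n by (simp add: dist_norm norm_minus_commute)
      moreover have "c - n \<bullet> x = q + n \<bullet> (a - x)"
        by (simp add: q_def inner_diff_right)
      ultimately have height: "q - dist x a \<le> c - n \<bullet> x"
        by linarith
      show ?thesis
      proof (cases "dist x a < q/2")
        case near: True
        have "radial_weight \<beta> a x / (d + (c - n \<bullet> x)) \<le> radial_weight \<beta> a x / (q/2)"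
          using height near d q radial_weight_nonneg[of \<beta> a x] by (intro divide_left_mono) auto
        then have "radial_weight \<beta> a x / (d + (c - n \<bullet> x)) \<le> 2/q * X x"
          using True by (simp add: X_def mult.commute)
        then show ?thesis
          using True B Y[of x] by (simp add: add_increasing2)
      next
        case far: False
        then have "radial_weight \<beta> a x \<le> B"
          using q \<beta> by (auto simp: radial_weight_def B_def intro: powr_mono2')
        then have "radial_weight \<beta> a x / (d + (c - n \<bullet> x)) \<le> B / (d + (c - n \<bullet> x))"
          using True d by (intro divide_right_mono) auto
        moreover have "dist x p < R + q"
          using dist_triangle[of x p a] True n q by (simp add: p_def dist_norm)
        ultimately show ?thesis
          using True q X[of x] by (simp add: Y_def add_increasing)
      qed
    next
      case False
      show ?thesis
        unfolding if_not_P[OF False] using X[of x] Y[of x] B q by simp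
    qed
    have "ennreal (if dist x a < R \<and> n \<bullet> x \<le> c then radial_weight \<beta> a x / (d + (c - n \<bullet> x)) else 0)
        \<le> ennreal (2/q) * ennreal (X x) + ennreal B * ennreal (Y x)" for x
    proof -
      have "ennreal (if dist x a < R \<and> n \<bullet> x \<le> c then radial_weight \<beta> a x / (d + (c - n \<bullet> x)) else 0)
          \<le> ennreal (2/q * X x + B * Y x)"
        by (rule ennreal_leI[OF pointwise])
      also have "\<dots> = ennreal (2/q) * ennreal (X x) + ennreal B * ennreal (Y x)"
        by (simp only: ennreal_plus[OF mult_nonneg_nonneg[OF q2 X] mult_nonneg_nonneg[OF B Y]]
            ennreal_mult[OF q2 X] ennreal_mult[OF B Y])
      finally show ?thesis .
    qed
    then have "halfplane_integral \<beta> a R n c d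
        \<le> (\<integral>\<^sup>+x. ennreal (2/q) * ennreal (X x) + ennreal B * ennreal (Y x) \<partial>lborel)"
      unfolding halfplane_integral_def by (rule nn_integral_mono)
    also have "\<dots> = ennreal (2/q) * (\<integral>\<^sup>+x. ennreal (X x) \<partial>lborel) + ennreal B * (\<integral>\<^sup>+x. ennreal (Y x) \<partial>lborel)"
      by (simp add: X_def Y_def nn_integral_add nn_integral_cmult)
    also have "\<dots> \<le> ennreal (2/q) * ennreal C + ennreal B * ennreal (K0 * corner_rate 0 d)"
      using ball_integral_radial_weight_le[OF \<beta>, of R a] R through_p[OF d]
      by (intro add_mono mult_left_mono) (simp_all add: X_def Y_def C_def halfplane_integral_def)
    also have "\<dots> = ennreal (2/q * C + B * (K0 * (- ln d)))"
    proof -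
      have L: "0 \<le> K0 * (- ln d)"
        using K0 small_parameter_bounds[OF d] by (intro mult_nonneg_nonneg) auto
      show ?thesis
        by (simp only: corner_rate_zero ennreal_plus[OF mult_nonneg_nonneg[OF q2 C] mult_nonneg_nonneg[OF B L]]
            ennreal_mult[OF q2 C] ennreal_mult[OF B L])
    qed
    also have "\<dots> \<le> ennreal ((2/q * C + B * K0) * corner_rate \<beta> d)"
    proof (rule ennreal_leI)
      have L: "1 \<le> - ln d" "- ln d \<le> corner_rate \<beta> d"
        using small_parameter_bounds[OF d] minus_ln_le_corner_rate[OF d \<beta>(2)] by simp_all
      have "2/q * C * 1 \<le> 2/q * C * corner_rate \<beta> d"
        using L q C by (intro mult_left_mono) auto
      moreover have "B * K0 * (- ln d) \<le> B * K0 * corner_rate \<beta> d"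
        using L B K0 by (intro mult_left_mono) auto
      ultimately show "2/q * C + B * (K0 * (- ln d)) \<le> (2/q * C + B * K0) * corner_rate \<beta> d"
        by (simp add: distrib_right mult.assoc)
    qed
    finally show "halfplane_integral \<beta> a R n c d \<le> ennreal ((2/q * C + B * K0) * corner_rate \<beta> d)" .
  qed
qed

lemma finite_uniform_bound:
  fixes f :: "'i \<Rightarrow> 't \<Rightarrow> ennreal" and g :: "'i \<Rightarrow> 't \<Rightarrow> real"
  assumes I: "finite I" and g: "\<And>i t. Q t \<Longrightarrow> 0 \<le> g i t"
    and bound: "\<And>i. i \<in> I \<Longrightarrow> \<exists>K\<ge>0. \<forall>t. Q t \<longrightarrow> f i t \<le> ennreal (K * g i t)"
  shows "\<exists>K\<ge>0. \<forall>i\<in>I. \<forall>t. Q t \<longrightarrow> f i t \<le> ennreal (K * g i t)"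
proof -
  have "\<forall>i\<in>I. \<exists>K. 0 \<le> K \<and> (\<forall>t. Q t \<longrightarrow> f i t \<le> ennreal (K * g i t))"
    using bound by blast
  from bchoice[OF this] obtain K where K: "\<forall>i\<in>I. 0 \<le> K i \<and> (\<forall>t. Q t \<longrightarrow> f i t \<le> ennreal (K i * g i t))" ..
  show ?thesis
  proof (intro exI[of _ "\<Sum>i\<in>I. K i"] conjI ballI allI impI)
    show "0 \<le> (\<Sum>i\<in>I. K i)"
      using K by (simp add: sum_nonneg)
    fix i t
    assume "i \<in> I" "Q t"
    moreover have "K i \<le> (\<Sum>i\<in>I. K i)"
      using K \<open>i \<in> I\<close> I by (intro member_le_sum) auto
    ultimately show "f i t \<le> ennreal ((\<Sum>i\<in>I. K i) * g i t)"
      using K g by (meson ennreal_leI mult_right_mono order_trans)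
  qed
qed

lemma polytope_unit_halfspaces:
  fixes P :: "'a::euclidean_space set"
  assumes "polytope P"
  obtains L :: "('a \<times> real) set"
  where "finite L" "\<And>l. l \<in> L \<Longrightarrow> norm (fst l) = 1" "P = {x. \<forall>l\<in>L. fst l \<bullet> x \<le> snd l}"
proof -
  obtain F where F: "finite F" "P = \<Inter>F" and Fh: "\<forall>h\<in>F. \<exists>a b. a \<noteq> 0 \<and> h = {x. a \<bullet> x \<le> b}"
    using polytope_imp_polyhedron[OF assms, unfolded polyhedron_def] by blast
  from bchoice[OF Fh] obtain A where "\<forall>h\<in>F. \<exists>b. A h \<noteq> 0 \<and> h = {x. A h \<bullet> x \<le> b}" ..
  from bchoice[OF this] obtain B where "\<forall>h\<in>F. A h \<noteq> 0 \<and> h = {x. A h \<bullet> x \<le> B h}" ..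
  then have A: "\<And>h. h \<in> F \<Longrightarrow> A h \<noteq> 0"
    and mem: "\<And>h x. h \<in> F \<Longrightarrow> x \<in> h \<longleftrightarrow> A h \<bullet> x \<le> B h"
    by blast+
  define L where "L = (\<lambda>h. (A h /\<^sub>R norm (A h), B h / norm (A h))) ` F"
  have "x \<in> h \<longleftrightarrow> (A h /\<^sub>R norm (A h)) \<bullet> x \<le> B h / norm (A h)" if "h \<in> F" for h x
    using A[OF that] mem[OF that] by (simp add: field_simps)
  then have "P = {x. \<forall>l\<in>L. fst l \<bullet> x \<le> snd l}"
    using F(2) by (auto simp: L_def)
  moreover have "finite L" "\<And>l. l \<in> L \<Longrightarrow> norm (fst l) = 1"
    using F(1) A by (auto simp: L_def)
  ultimately show ?thesis
    using that by blast
qed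

lemma halfspace_slack_le_infdist_frontier:
  fixes L :: "('a::euclidean_space \<times> real) set"
  assumes L: "finite L" and unit: "\<And>l. l \<in> L \<Longrightarrow> norm (fst l) = 1"
    and P: "P = {x. \<forall>l\<in>L. fst l \<bullet> x \<le> snd l}" and bounded: "bounded P" and x: "x \<in> interior P"
  shows "\<exists>l\<in>L. snd l - fst l \<bullet> x \<le> infdist x (frontier (interior P))"
proof (rule ccontr)
  assume none: "\<not> (\<exists>l\<in>L. snd l - fst l \<bullet> x \<le> infdist x (frontier (interior P)))"
  have far: "infdist x (frontier (interior P)) < snd l - fst l \<bullet> x" if "l \<in> L" for l
    using none that by (meson not_le)
  have "interior P \<noteq> UNIV"
    using bounded_subset[OF bounded interior_subset] not_bounded_UNIV by auto
  then have "frontier (interior P) \<noteq> {}"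
    using x frontier_not_empty by blast
  then obtain y where y: "y \<in> frontier (interior P)" "infdist x (frontier (interior P)) = dist x y"
    using infdist_attains_inf[OF frontier_closed] by blast
  define U where "U = (\<Inter>l\<in>L. {z. fst l \<bullet> z < snd l})"
  have "open U"
    unfolding U_def using L by (intro open_INT ballI open_halfspace_lt)
  moreover have "U \<subseteq> P"
    unfolding U_def P by (blast intro: less_imp_le)
  ultimately have "U \<subseteq> interior P"
    by (rule interior_maximal[rotated])
  moreover have "fst l \<bullet> y < snd l" if "l \<in> L" for l
  proof -
    have "fst l \<bullet> (y - x) \<le> dist x y"
      using Cauchy_Schwarz_ineq2[of "fst l" "y - x"] unit[OF that] by (simp add: dist_norm norm_minus_commute)
    then show ?thesis
      using far[OF that] y(2) by (simp add: inner_diff_right)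
  qed
  then have "y \<in> U"
    unfolding U_def by blast
  moreover have "y \<notin> interior P"
    using y(1) by (simp add: frontier_def)
  ultimately show False
    by blast
qed

lemma polygon_weighted_integral_le:
  fixes P :: "(real^2) set" and a :: "real^2"
  assumes P: "polytope P" and a: "a \<in> P" and \<beta>: "0 \<le> \<beta>" "\<beta> < 1" and R: "0 < R"
  shows "\<exists>K\<ge>0. \<forall>d. 0 < d \<and> d < exp (-1) \<longrightarrow>
    (\<integral>\<^sup>+x\<in>interior P \<inter> ball a R.
       ennreal (radial_weight \<beta> a x / (d + infdist x (frontier (interior P)))) \<partial>lborel)
    \<le> ennreal (K * corner_rate \<beta> d)"
proof -
  obtain L where L: "finite L" and unit: "\<And>l. l \<in> L \<Longrightarrow> norm (fst l) = 1"
    and P_eq: "P = {x. \<forall>l\<in>L. fst l \<bullet> x \<le> snd l}"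
    using polytope_unit_halfspaces[OF P] by blast
  have each: "\<exists>K\<ge>0. \<forall>d. 0 < d \<and> d < exp (-1) \<longrightarrow>
      halfplane_integral \<beta> a R (fst l) (snd l) d \<le> ennreal (K * corner_rate \<beta> d)" if "l \<in> L" for l
  proof (rule halfplane_integral_le[OF unit[OF that] \<beta> R])
    show "fst l \<bullet> a \<le> snd l"
      using a that unfolding P_eq by blast
  qed
  have rate_nonneg: "0 \<le> corner_rate \<beta> d" if "0 < d \<and> d < exp (-1)" for d
  proof -
    from that have d: "0 < d" "d < exp (-1)"
      by auto
    show ?thesis
      using minus_ln_le_corner_rate[OF d \<beta>(2)] small_parameter_bounds(2)[OF d] by linarith
  qed
  obtain K where K: "0 \<le> K" and bound: "\<forall>l\<in>L. \<forall>d. 0 < d \<and> d < exp (-1) \<longrightarrow>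
      halfplane_integral \<beta> a R (fst l) (snd l) d \<le> ennreal (K * corner_rate \<beta> d)"
    using finite_uniform_bound[where f = "\<lambda>l d. halfplane_integral \<beta> a R (fst l) (snd l) d"
        and g = "\<lambda>l d. corner_rate \<beta> d" and Q = "\<lambda>d. 0 < d \<and> d < exp (-1)", OF L rate_nonneg each]
    by blast
  show ?thesis
  proof (intro exI[of _ "card L * K"] conjI allI impI)
    show "0 \<le> card L * K"
      using K by simp
    fix d :: real
    assume "0 < d \<and> d < exp (-1)"
    then have d: "0 < d" "d < exp (-1)"
      by auto
    define H where "H = (\<lambda>l x. ennreal (if dist x a < R \<and> fst l \<bullet> x \<le> snd l
      then radial_weight \<beta> a x / (d + (snd l - fst l \<bullet> x)) else 0))"
    have H_meas: "H l \<in> borel_measurable borel" for l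
      unfolding H_def by measurable
    have "ennreal (radial_weight \<beta> a x / (d + infdist x (frontier (interior P))))
        * indicator (interior P \<inter> ball a R) x \<le> (\<Sum>l\<in>L. H l x)" for x
    proof (cases "x \<in> interior P \<inter> ball a R")
      case True
      then obtain l where l: "l \<in> L" and slack: "snd l - fst l \<bullet> x \<le> infdist x (frontier (interior P))"
        using halfspace_slack_le_infdist_frontier[OF L unit P_eq polytope_imp_bounded[OF P]] by blast
      have inside: "fst l \<bullet> x \<le> snd l"
        using True l interior_subset unfolding P_eq by blast
      with slack d have "radial_weight \<beta> a x / (d + infdist x (frontier (interior P)))
          \<le> radial_weight \<beta> a x / (d + (snd l - fst l \<bullet> x))"
        using radial_weight_nonneg by (intro divide_left_mono) auto
      then have "ennreal (radial_weight \<beta> a x / (d + infdist x (frontier (interior P)))) \<le> H l x"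
        using True inside by (simp add: H_def dist_commute ennreal_leI)
      also have "\<dots> \<le> (\<Sum>l\<in>L. H l x)"
        using L l by (intro member_le_sum) auto
      finally show ?thesis
        using True by simp
    qed simp
    then have "(\<integral>\<^sup>+x\<in>interior P \<inter> ball a R.
          ennreal (radial_weight \<beta> a x / (d + infdist x (frontier (interior P)))) \<partial>lborel)
        \<le> (\<integral>\<^sup>+x. (\<Sum>l\<in>L. H l x) \<partial>lborel)"
      by (rule nn_integral_mono)
    also have "\<dots> = (\<Sum>l\<in>L. halfplane_integral \<beta> a R (fst l) (snd l) d)"
      by (subst nn_integral_sum) (simp_all add: H_meas H_def halfplane_integral_def)
    also have "\<dots> \<le> (\<Sum>l\<in>L. ennreal (K * corner_rate \<beta> d))"
      using bound d by (intro sum_mono) blast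
    also have "\<dots> = of_nat (card L) * ennreal (K * corner_rate \<beta> d)"
      by simp
    also have "\<dots> = ennreal (card L * K * corner_rate \<beta> d)"
      using K rate_nonneg d by (simp add: ennreal_of_nat_eq_real_of_nat ennreal_mult mult.assoc)
    finally show "(\<integral>\<^sup>+x\<in>interior P \<inter> ball a R.
          ennreal (radial_weight \<beta> a x / (d + infdist x (frontier (interior P)))) \<partial>lborel)
        \<le> ennreal (card L * K * corner_rate \<beta> d)" .
  qed
qed

lemma powr_squared: "x \<noteq> 0 \<Longrightarrow> (x powr a)\<^sup>2 = x powr (2 * a)"
  for x a :: real
  using powr_power[of x a 2] by simp

lemma powr_neg_half_squared: "0 < s \<Longrightarrow> (s powr - (1/2))\<^sup>2 = 1 / s"
  for s :: real
  using powr_squared[of s "- (1/2)"] by (simp add: powr_minus_divide)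

lemma L2_norm_sq_weighted_le:
  fixes \<sigma> :: "real^2 \<Rightarrow> real"
  assumes \<sigma>: "\<And>x. 0 < \<sigma> x"
  shows "L2_norm_sq S (\<lambda>x. \<sigma> x powr (-1/2) * dist x a powr (-\<beta>))
    \<le> (\<integral>\<^sup>+x\<in>S. ennreal (radial_weight \<beta> a x / \<sigma> x) \<partial>lborel)"
  unfolding L2_norm_sq_def
proof (intro nn_integral_mono mult_right_mono ennreal_leI)
  fix x :: "real^2"
  have "(dist x a powr (-\<beta>))\<^sup>2 \<le> radial_weight \<beta> a x"
    using powr_squared[of "dist x a" "-\<beta>"] by (cases "x = a") (simp_all add: radial_weight_def)
  then show "(\<sigma> x powr (-1/2) * dist x a powr (-\<beta>))\<^sup>2 \<le> radial_weight \<beta> a x / \<sigma> x"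
    using \<sigma>[of x] by (simp add: power_mult_distrib powr_neg_half_squared divide_right_mono)
qed simp

lemma L2_norm_sq_inverse_sqrt:
  fixes \<sigma> :: "real^2 \<Rightarrow> real"
  assumes \<sigma>: "\<And>x. 0 < \<sigma> x"
  shows "L2_norm_sq S (\<lambda>x. \<sigma> x powr (-1/2)) = (\<integral>\<^sup>+x\<in>S. ennreal (1 / \<sigma> x) \<partial>lborel)"
  unfolding L2_norm_sq_def using \<sigma> by (intro nn_integral_cong) (simp add: powr_neg_half_squared)

lemma L2_norm_sq_mono: "S \<subseteq> T \<Longrightarrow> L2_norm_sq S f \<le> L2_norm_sq T f"
  unfolding L2_norm_sq_def by (intro nn_integral_mono mult_left_mono) (auto simp: indicator_def)

definition norm_rate :: "real \<Rightarrow> real \<Rightarrow> real" where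
  "norm_rate \<beta> h = \<bar>ln h\<bar> powr (1/2)
     * (if \<beta> \<noteq> 1/2 then h powr (min 0 (1 - 2*\<beta>)) else \<bar>ln h\<bar> powr (1/2))"

lemma norm_rate_zero: "0 < h \<Longrightarrow> norm_rate 0 h = \<bar>ln h\<bar> powr (1/2)"
  by (simp add: norm_rate_def)

lemma norm_rate_squared:
  assumes "0 < h"
  shows "(norm_rate \<beta> h)\<^sup>2
    = \<bar>ln h\<bar> * (if \<beta> \<noteq> 1/2 then h powr (2 * min 0 (1 - 2*\<beta>)) else \<bar>ln h\<bar>)"
  using assms by (simp add: norm_rate_def power_mult_distrib powr_half_sqrt powr_squared)

lemma corner_rate_le_norm_rate:
  fixes cI h \<beta> :: real
  assumes cI: "1 < cI" and h: "0 < h" "cI * h\<^sup>2 < exp (-1)"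
  shows "corner_rate \<beta> (cI * h\<^sup>2) \<le> 4 * (norm_rate \<beta> h)\<^sup>2"
proof -
  define d where "d = cI * h\<^sup>2"
  have d: "0 < d" "d < exp (-1)"
    using cI h by (simp_all add: d_def)
  have "h\<^sup>2 < 1"
    using h(2) d small_parameter_bounds[OF d] cI by (simp add: d_def) (smt (verit) mult_le_cancel_right1 zero_le_power2)
  then have h1: "h < 1"
    using h(1) by (simp add: power_less_one_iff)
  define Lh where "Lh = \<bar>ln h\<bar>"
  have Lh: "Lh = - ln h" "0 < Lh" and ln_h: "ln h < 0"
    using h(1) h1 by (simp_all add: Lh_def)
  have "ln d = ln cI + 2 * ln h"
    using cI h(1) by (simp add: d_def ln_mult ln_realpow)
  then have L: "- ln d \<le> 2 * Lh"
    using cI Lh by simp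
  have L0: "0 < - ln d"
    using small_parameter_bounds[OF d] by simp
  have rate: "(norm_rate \<beta> h)\<^sup>2 = Lh * (if \<beta> \<noteq> 1/2 then h powr (2 * min 0 (1 - 2*\<beta>)) else Lh)"
    using h(1) by (simp add: norm_rate_squared Lh_def)
  show ?thesis
  proof (cases "\<beta> < 1/2")
    case True
    then have "corner_rate \<beta> (cI * h\<^sup>2) = - ln d" "(norm_rate \<beta> h)\<^sup>2 = Lh"
      using h(1) by (simp_all add: corner_rate_def d_def rate)
    then show ?thesis
      using L Lh by simp
  next
    case False
    show ?thesis
    proof (cases "\<beta> = 1/2")
      case True
      have "(- ln d) * (- ln d) \<le> (2 * Lh) * (2 * Lh)"
        using L L0 by (intro mult_mono) auto
      moreover have "corner_rate \<beta> (cI * h\<^sup>2) = (- ln d) * (- ln d)"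
        using True by (simp add: corner_rate_def d_def power2_eq_square)
      moreover have "(norm_rate \<beta> h)\<^sup>2 = Lh * Lh"
        using True by (simp add: rate)
      ultimately show ?thesis
        by simp
    next
      case half: False
      have "(h\<^sup>2) powr (1 - 2*\<beta>) = h powr (2 * (1 - 2*\<beta>))"
        using powr_powr[of h 2 "1 - 2*\<beta>"] h(1) by simp
      then have "d powr (1 - 2*\<beta>) = cI powr (1 - 2*\<beta>) * h powr (2 * (1 - 2*\<beta>))"
        using cI h(1) by (simp add: d_def powr_mult)
      also have "\<dots> \<le> cI powr 0 * h powr (2 * (1 - 2*\<beta>))"
        using cI False by (intro mult_right_mono powr_mono) auto
      finally have "- ln d * d powr (1 - 2*\<beta>) \<le> (2 * Lh) * h powr (2 * (1 - 2*\<beta>))"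
        using L L0 cI by (intro mult_mono) auto
      moreover have "corner_rate \<beta> (cI * h\<^sup>2) = - ln d * d powr (1 - 2*\<beta>)"
        "(norm_rate \<beta> h)\<^sup>2 = Lh * h powr (2 * (1 - 2*\<beta>))"
        using False half by (simp_all add: corner_rate_def d_def rate)
      moreover have "0 \<le> Lh * h powr (2 * (1 - 2*\<beta>))"
        using Lh(2) by (intro mult_nonneg_nonneg) auto
      ultimately show ?thesis
        by linarith
    qed
  qed
qed

lemma ennreal_le_scaled_square:
  fixes K M r :: real
  assumes "x \<le> ennreal (K * r\<^sup>2)" "0 \<le> K" "K \<le> M"
  shows "x \<le> ennreal ((sqrt M * r)\<^sup>2)"
proof -
  have "K * r\<^sup>2 \<le> M * r\<^sup>2"
    using assms(3) by (simp add: mult_right_mono)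
  moreover have "(sqrt M * r)\<^sup>2 = M * r\<^sup>2"
    using assms(2,3) by (simp add: power_mult_distrib)
  ultimately show ?thesis
    using assms(1) by (metis ennreal_leI order_trans)
qed

lemma sigma_weighted_integral_le:
  fixes P :: "(real^2) set" and a :: "real^2"
  assumes P: "polytope P" and a: "a \<in> P" and \<beta>: "0 \<le> \<beta>" "\<beta> < 1" and R: "0 < R" and cI: "1 < cI"
  shows "\<exists>K\<ge>0. \<forall>h. 0 < h \<and> cI * h\<^sup>2 < exp (-1) \<longrightarrow>
    (\<integral>\<^sup>+x\<in>interior P \<inter> ball a R. ennreal (radial_weight \<beta> a x / sigma_w (interior P) cI h x) \<partial>lborel)
    \<le> ennreal (K * (norm_rate \<beta> h)\<^sup>2)"
proof -
  obtain K where K: "0 \<le> K" and bound: "\<And>d. 0 < d \<Longrightarrow> d < exp (-1) \<Longrightarrow>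
      (\<integral>\<^sup>+x\<in>interior P \<inter> ball a R.
         ennreal (radial_weight \<beta> a x / (d + infdist x (frontier (interior P)))) \<partial>lborel)
      \<le> ennreal (K * corner_rate \<beta> d)"
    using polygon_weighted_integral_le[OF P a \<beta> R] by blast
  show ?thesis
  proof (intro exI[of _ "4 * K"] conjI allI impI)
    show "0 \<le> 4 * K"
      using K by simp
    fix h :: real
    assume h: "0 < h \<and> cI * h\<^sup>2 < exp (-1)"
    have "(\<integral>\<^sup>+x\<in>interior P \<inter> ball a R. ennreal (radial_weight \<beta> a x / sigma_w (interior P) cI h x) \<partial>lborel)
        \<le> ennreal (K * corner_rate \<beta> (cI * h\<^sup>2))"
      unfolding sigma_w_def using bound cI h by simp
    also have "\<dots> \<le> ennreal (K * (4 * (norm_rate \<beta> h)\<^sup>2))"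
      using corner_rate_le_norm_rate[OF cI, of h \<beta>] h K by (intro ennreal_leI mult_left_mono) auto
    also have "\<dots> = ennreal (4 * K * (norm_rate \<beta> h)\<^sup>2)"
      by (simp add: ac_simps)
    finally show "(\<integral>\<^sup>+x\<in>interior P \<inter> ball a R.
        ennreal (radial_weight \<beta> a x / sigma_w (interior P) cI h x) \<partial>lborel)
      \<le> ennreal (4 * K * (norm_rate \<beta> h)\<^sup>2)" .
  qed
qed

lemma sigma_w_pos: "0 < cI \<Longrightarrow> 0 < h \<Longrightarrow> 0 < sigma_w \<Omega> cI h x"
  by (simp add: sigma_w_def add_pos_nonneg infdist_nonneg)

lemma corner_L2_norm_sq_le:
  fixes P :: "(real^2) set" and a :: "real^2"
  assumes P: "polytope P" and a: "a \<in> P" and \<beta>: "0 \<le> \<beta>" "\<beta> < 1" and R: "0 < R" and cI: "1 < cI"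
  shows "\<exists>K\<ge>0. \<forall>h. 0 < h \<and> cI * h\<^sup>2 < exp (-1) \<longrightarrow>
    L2_norm_sq (interior P \<inter> ball a R) (\<lambda>x. sigma_w (interior P) cI h x powr (-1/2) * dist x a powr (-\<beta>))
    \<le> ennreal (K * (norm_rate \<beta> h)\<^sup>2)"
  using sigma_weighted_integral_le[OF assms] L2_norm_sq_weighted_le[OF sigma_w_pos] cI
  by (meson order.trans less_trans zero_less_one)

lemma interior_L2_norm_sq_le:
  fixes P :: "(real^2) set"
  assumes P: "polytope P" and "P \<noteq> {}" and cI: "1 < cI"
  shows "\<exists>K\<ge>0. \<forall>h. 0 < h \<and> cI * h\<^sup>2 < exp (-1) \<longrightarrow>
    L2_norm_sq (interior P) (\<lambda>x. sigma_w (interior P) cI h x powr (-1/2)) \<le> ennreal (K * (norm_rate 0 h)\<^sup>2)"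
proof -
  obtain a where a: "a \<in> P"
    using assms by blast
  obtain M where M: "0 < M" "P \<subseteq> ball a M"
    using bounded_subset_ballD[OF polytope_imp_bounded[OF P]] by blast
  then have "interior P \<inter> ball a M = interior P"
    using interior_subset by blast
  moreover have "L2_norm_sq (interior P) (\<lambda>x. sigma_w (interior P) cI h x powr (-1/2))
      = (\<integral>\<^sup>+x\<in>interior P. ennreal (radial_weight 0 a x / sigma_w (interior P) cI h x) \<partial>lborel)"
    if "0 < h" for h
    using L2_norm_sq_inverse_sqrt[OF sigma_w_pos] cI that by simp
  ultimately show ?thesis
    using sigma_weighted_integral_le[OF P a _ _ M(1) cI, of 0] by auto
qed

lemma polygon_L2_norm_sq_bounds:
  fixes P C :: "(real^2) set" and \<beta> :: "real^2 \<Rightarrow> real"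
  assumes P: "polytope P" "P \<noteq> {}" and C: "finite C" "C \<subseteq> P"
    and \<beta>: "\<forall>a\<in>C. 0 \<le> \<beta> a \<and> \<beta> a < 1" and R: "0 < R" and cI: "1 < cI"
  shows "\<exists>K\<ge>0. \<forall>h. 0 < h \<and> cI * h\<^sup>2 < exp (-1) \<longrightarrow>
    (\<forall>a\<in>C. L2_norm_sq (interior P \<inter> ball a R)
         (\<lambda>x. sigma_w (interior P) cI h x powr (-1/2) * dist x a powr (- \<beta> a))
       \<le> ennreal (K * (norm_rate (\<beta> a) h)\<^sup>2))
    \<and> L2_norm_sq (interior P) (\<lambda>x. sigma_w (interior P) cI h x powr (-1/2))
       \<le> ennreal (K * (norm_rate 0 h)\<^sup>2)"
proof -
  have "\<exists>K\<ge>0. \<forall>h. 0 < h \<and> cI * h\<^sup>2 < exp (-1) \<longrightarrow>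
      L2_norm_sq (interior P \<inter> ball a R)
        (\<lambda>x. sigma_w (interior P) cI h x powr (-1/2) * dist x a powr (- \<beta> a))
      \<le> ennreal (K * (norm_rate (\<beta> a) h)\<^sup>2)" if "a \<in> C" for a
    using that C(2) \<beta> by (intro corner_L2_norm_sq_le[OF P(1) _ _ _ R cI]) auto
  from finite_uniform_bound[where Q = "\<lambda>h. 0 < h \<and> cI * h\<^sup>2 < exp (-1)"
      and g = "\<lambda>a h. (norm_rate (\<beta> a) h)\<^sup>2", OF C(1) zero_le_power2 this]
  obtain K where K: "0 \<le> K" and corners: "\<forall>a\<in>C. \<forall>h. 0 < h \<and> cI * h\<^sup>2 < exp (-1) \<longrightarrow>
      L2_norm_sq (interior P \<inter> ball a R)
        (\<lambda>x. sigma_w (interior P) cI h x powr (-1/2) * dist x a powr (- \<beta> a))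
      \<le> ennreal (K * (norm_rate (\<beta> a) h)\<^sup>2)"
    by blast
  obtain K0 where K0: "0 \<le> K0" and interior: "\<forall>h. 0 < h \<and> cI * h\<^sup>2 < exp (-1) \<longrightarrow>
      L2_norm_sq (interior P) (\<lambda>x. sigma_w (interior P) cI h x powr (-1/2))
      \<le> ennreal (K0 * (norm_rate 0 h)\<^sup>2)"
    using interior_L2_norm_sq_le[OF P cI] by blast
  have le_max: "ennreal (k * r\<^sup>2) \<le> ennreal (max K K0 * r\<^sup>2)" if "k \<le> max K K0" for k r
    using that by (intro ennreal_leI mult_right_mono) auto
  show ?thesis
  proof (intro exI[of _ "max K K0"] conjI allI impI ballI)
    show "0 \<le> max K K0"
      using K by simp
    fix h a
    assume "0 < h \<and> cI * h\<^sup>2 < exp (-1)" "a \<in> C"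
    then show "L2_norm_sq (interior P \<inter> ball a R)
        (\<lambda>x. sigma_w (interior P) cI h x powr (-1/2) * dist x a powr (- \<beta> a))
      \<le> ennreal (max K K0 * (norm_rate (\<beta> a) h)\<^sup>2)"
      using corners le_max[OF max.cobounded1] by (meson order_trans)
  next
    fix h
    assume "0 < h \<and> cI * h\<^sup>2 < exp (-1)"
    then show "L2_norm_sq (interior P) (\<lambda>x. sigma_w (interior P) cI h x powr (-1/2))
      \<le> ennreal (max K K0 * (norm_rate 0 h)\<^sup>2)"
      using interior le_max[OF max.cobounded2] by (meson order_trans)
  qed
qed

theorem lemma3p3:
  fixes V :: "(real^2) set" and \<Omega> :: "(real^2) set" and C :: "(real^2) set"
    and cI R :: real and \<beta> :: "real^2 \<Rightarrow> real"
  assumes "finite V"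
    and "\<Omega> = interior (convex hull V)"
    and "\<Omega> \<noteq> {}"
    and "C = {v. v extreme_point_of (convex hull V)}"
    and "cI > 1"
    and "R > 0"
    and "\<forall>a\<in>C. \<forall>b\<in>C. a \<noteq> b \<longrightarrow> (\<Omega> \<inter> ball a R) \<inter> (\<Omega> \<inter> ball b R) = {}"
    and "\<forall>a\<in>C. 0 \<le> \<beta> a \<and> \<beta> a < 1"
  shows "\<exists>c::real. \<forall>h::real. h > 0 \<and> cI * h\<^sup>2 < exp (-1) \<longrightarrow>
           (\<forall>a\<in>C.
              L2_norm_sq (\<Omega> \<inter> ball a R)
                (\<lambda>x. sigma_w \<Omega> cI h x powr (-1/2) * dist x a powr (- \<beta> a))
              \<le> ennreal ((c * \<bar>ln h\<bar> powr (1/2) *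
                   (if \<beta> a \<noteq> 1/2 then h powr (min 0 (1 - 2 * \<beta> a))
                    else \<bar>ln h\<bar> powr (1/2)))\<^sup>2))
         \<and> L2_norm_sq (\<Omega> - (\<Union>a\<in>C. \<Omega> \<inter> ball a (R/2)))
              (\<lambda>x. sigma_w \<Omega> cI h x powr (-1/2))
           \<le> ennreal ((c * \<bar>ln h\<bar> powr (1/2))\<^sup>2)"
proof -
  define P where "P = convex hull V"
  have P: "polytope P" "P \<noteq> {}" and \<Omega>: "\<Omega> = interior P"
    using assms(1-3) interior_subset by (auto simp: P_def polytope_convex_hull)
  have "C \<subseteq> V"
    using assms(4) extreme_point_of_convex_hull by blast
  then have C: "finite C" "C \<subseteq> P"
    using assms(1) finite_subset hull_subset[of V convex] by (auto simp: P_def)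
  obtain K where K: "0 \<le> K" and bounds: "\<forall>h. 0 < h \<and> cI * h\<^sup>2 < exp (-1) \<longrightarrow>
      (\<forall>a\<in>C. L2_norm_sq (\<Omega> \<inter> ball a R) (\<lambda>x. sigma_w \<Omega> cI h x powr (-1/2) * dist x a powr (- \<beta> a))
         \<le> ennreal (K * (norm_rate (\<beta> a) h)\<^sup>2))
      \<and> L2_norm_sq \<Omega> (\<lambda>x. sigma_w \<Omega> cI h x powr (-1/2)) \<le> ennreal (K * (norm_rate 0 h)\<^sup>2)"
    using polygon_L2_norm_sq_bounds[OF P C assms(8,6,5), folded \<Omega>] by blast
  have away: "L2_norm_sq (\<Omega> - (\<Union>a\<in>C. \<Omega> \<inter> ball a (R/2))) f \<le> L2_norm_sq \<Omega> f" for f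
    by (rule L2_norm_sq_mono) blast
  show ?thesis
  proof (intro exI[of _ "sqrt K"] allI impI conjI ballI)
    fix h a
    assume "0 < h \<and> cI * h\<^sup>2 < exp (-1)" "a \<in> C"
    then have "L2_norm_sq (\<Omega> \<inter> ball a R) (\<lambda>x. sigma_w \<Omega> cI h x powr (-1/2) * dist x a powr (- \<beta> a))
        \<le> ennreal (K * (norm_rate (\<beta> a) h)\<^sup>2)"
      using bounds by blast
    from ennreal_le_scaled_square[OF this K order_refl] show "L2_norm_sq (\<Omega> \<inter> ball a R)
        (\<lambda>x. sigma_w \<Omega> cI h x powr (-1/2) * dist x a powr (- \<beta> a))
      \<le> ennreal ((sqrt K * \<bar>ln h\<bar> powr (1/2) *
          (if \<beta> a \<noteq> 1/2 then h powr (min 0 (1 - 2 * \<beta> a)) else \<bar>ln h\<bar> powr (1/2)))\<^sup>2)"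
      by (simp only: norm_rate_def mult.assoc)
  next
    fix h
    assume h: "0 < h \<and> cI * h\<^sup>2 < exp (-1)"
    then have "L2_norm_sq \<Omega> (\<lambda>x. sigma_w \<Omega> cI h x powr (-1/2)) \<le> ennreal (K * (norm_rate 0 h)\<^sup>2)"
      using bounds by blast
    from order_trans[OF away ennreal_le_scaled_square[OF this K order_refl]]
    show "L2_norm_sq (\<Omega> - (\<Union>a\<in>C. \<Omega> \<inter> ball a (R/2)))
        (\<lambda>x. sigma_w \<Omega> cI h x powr (-1/2)) \<le> ennreal ((sqrt K * \<bar>ln h\<bar> powr (1/2))\<^sup>2)"
      unfolding norm_rate_zero[OF conjunct1[OF h]] .
  qed
qed

end
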